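(* For every discrete distribution $\mu$, $S[\mu]^2\le \frac13 M_2[\mu]\,M_0[\mu]^3$.
   Context: A discrete distribution is a finite set $\mu=\{(x_1,m_1),\dots,(x_k,m_k)\}$ with $x_i\in\mathbb R$ distinct and $m_i>0$. Its moments are $M_j[\mu]=\sum_i m_ix_i^j$. Its spread is $S[\mu]=\sum_{i<j}|x_i-x_j|\,m_im_j$. *)

theory Defs
  imports Complex_Main
begin

definition discrete_dist :: "real set \<Rightarrow> (real \<Rightarrow> real) \<Rightarrow> bool" where
  "discrete_dist X m \<longleftrightarrow> finite X \<and> (\<forall>x\<in>X. m x > 0)"

definition moment :: "nat \<Rightarrow> real set \<Rightarrow> (real \<Rightarrow> real) \<Rightarrow> real" where
  "moment j X m = (\<Sum>x\<in>X. m x * x ^ j)"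

definition spread :: "real set \<Rightarrow> (real \<Rightarrow> real) \<Rightarrow> real" where
  "spread X m = (\<Sum>(x, y)\<in>{(x, y). x \<in> X \<and> y \<in> X \<and> x < y}. \<bar>x - y\<bar> * m x * m y)"

end

theory Submission
  imports Defs "HOL-Analysis.Convex"
begin

(* Write W = M_0 for the total mass and, for an atom x, L(x) for the mass
   strictly below x.  The centred mid-rank  c(x) = 2 L(x) + m(x) - W  measures how far x
   sits from the "middle" of the distribution, and splitting the spread according to
   which atom of a pair is larger gives the identity  S = \<Sum>_x m(x) x c(x).
   Weighted Cauchy-Schwarz then yields  S^2 \<le> M_2 \<cdot> \<Sum>_x m(x) c(x)^2, so it remains
   to bound the "rank energy"  \<Sum>_x m(x) c(x)^2 \<le> W^3/3.  For this note that
   m(x) c(x)^2 + m(x)^3/3 is 1/6 of the increment of t \<mapsto> t^3 over the interval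
   [2L(x) - W, 2L(x) + 2m(x) - W]; these intervals tile [-W, W] when x runs through the
   atoms in increasing order, so the increments telescope to (W^3 + W^3)/6 = W^3/3.
   The file first establishes the spread identity, then the telescoping bound, and
   finally combines both with Cauchy-Schwarz. *)

definition mass_below :: "real set \<Rightarrow> (real \<Rightarrow> real) \<Rightarrow> real \<Rightarrow> real" where
  "mass_below X m x = (\<Sum>y\<in>X. if y < x then m y else 0)"

definition centred_rank :: "real set \<Rightarrow> (real \<Rightarrow> real) \<Rightarrow> real \<Rightarrow> real" where
  "centred_rank X m x = 2 * mass_below X m x + m x - sum m X"

lemma sum_ordered_pairs:
  fixes X :: "'a::linorder set"
  assumes "finite X"
  shows "(\<Sum>(x, y)\<in>{(x, y). x \<in> X \<and> y \<in> X \<and> x < y}. f x y)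
       = (\<Sum>x\<in>X. \<Sum>y\<in>X. if x < y then f x y else 0)"
proof -
  have pairs: "{(x, y). x \<in> X \<and> y \<in> X \<and> x < y} = {p \<in> X \<times> X. fst p < snd p}"
    by auto
  have "(\<Sum>(x, y)\<in>{(x, y). x \<in> X \<and> y \<in> X \<and> x < y}. f x y)
       = (\<Sum>p\<in>X \<times> X. if fst p < snd p then f (fst p) (snd p) else 0)"
    unfolding pairs using assms
    by (subst sum.inter_filter) (auto intro!: sum.cong simp: case_prod_beta)
  also have "\<dots> = (\<Sum>x\<in>X. \<Sum>y\<in>X. if x < y then f x y else 0)"
    by (simp add: sum.cartesian_product split_beta)
  finally show ?thesis .
qed

lemma mass_above:
  assumes "finite X" and "x \<in> X"
  shows "(\<Sum>y\<in>X. if x < y then m y else 0) = sum m X - mass_below X m x - m x"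
proof -
  have "sum m X = (\<Sum>y\<in>X. (if y < x then m y else 0) + (if y = x then m y else 0)
                              + (if x < y then m y else 0))"
    by (rule sum.cong) auto
  also have "\<dots> = mass_below X m x + m x + (\<Sum>y\<in>X. if x < y then m y else 0)"
    using assms by (simp add: sum.distrib mass_below_def)
  finally show ?thesis by simp
qed

text \<open>The spread identity S = \<Sum>_x m(x) x c(x): in a pair x < y the larger atom
  contributes +y m(x) m(y), the smaller one -x m(x) m(y).\<close>

lemma spread_eq_centred_rank_sum:
  assumes "finite X"
  shows "spread X m = (\<Sum>x\<in>X. m x * x * centred_rank X m x)"
proof -
  let ?upper = "\<Sum>x\<in>X. \<Sum>y\<in>X. if x < y then y * m x * m y else 0"
  let ?lower = "\<Sum>x\<in>X. \<Sum>y\<in>X. if x < y then x * m x * m y else 0"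
  have "spread X m = (\<Sum>x\<in>X. \<Sum>y\<in>X. if x < y then (y - x) * m x * m y else 0)"
    unfolding spread_def using sum_ordered_pairs[OF assms, of "\<lambda>x y. \<bar>x - y\<bar> * m x * m y"]
    by (auto intro!: sum.cong)
  also have "\<dots> = ?upper - ?lower"
    by (simp add: sum_subtractf[symmetric] algebra_simps if_distrib cong: if_cong)
  also have "?upper = (\<Sum>y\<in>X. y * m y * mass_below X m y)"
    by (subst sum.swap) (simp add: mass_below_def sum_distrib_left if_distrib mult_ac cong: if_cong)
  also have "?lower = (\<Sum>x\<in>X. x * m x * (sum m X - mass_below X m x - m x))"
  proof (rule sum.cong[OF refl])
    fix x assume "x \<in> X"
    have "(\<Sum>y\<in>X. if x < y then x * m x * m y else 0)
        = x * m x * (\<Sum>y\<in>X. if x < y then m y else 0)"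
      by (simp add: sum_distrib_left if_distrib cong: if_cong)
    then show "(\<Sum>y\<in>X. if x < y then x * m x * m y else 0)
        = x * m x * (sum m X - mass_below X m x - m x)"
      using mass_above[OF assms \<open>x \<in> X\<close>] by simp
  qed
  finally show ?thesis
    by (simp add: centred_rank_def sum_subtractf[symmetric] algebra_simps)
qed

lemma weighted_Cauchy_Schwarz:
  fixes w f g :: "'a \<Rightarrow> real"
  assumes "\<And>x. x \<in> A \<Longrightarrow> 0 \<le> w x"
  shows "(\<Sum>x\<in>A. w x * f x * g x)^2 \<le> (\<Sum>x\<in>A. w x * (f x)^2) * (\<Sum>x\<in>A. w x * (g x)^2)"
proof -
  have "(\<Sum>x\<in>A. (sqrt (w x) * f x) * (sqrt (w x) * g x))^2
      \<le> (\<Sum>x\<in>A. (sqrt (w x) * f x)^2) * (\<Sum>x\<in>A. (sqrt (w x) * g x)^2)"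
    by (rule Cauchy_Schwarz_ineq_sum)
  moreover have "(sqrt (w x) * f x) * (sqrt (w x) * g x) = w x * f x * g x"
    and "(sqrt (w x) * f x)^2 = w x * (f x)^2" and "(sqrt (w x) * g x)^2 = w x * (g x)^2"
    if "x \<in> A" for x
    using assms[OF that] by (auto simp: power_mult_distrib)
  ultimately show ?thesis
    by (metis (no_types, lifting) sum.cong)
qed

text \<open>Listing the atoms in increasing order, the intervals
  [s + 2 L(x), s + 2 L(x) + 2 m(x)] tile [s, s + 2 W], so the increments of the cube
  over them telescope.\<close>

lemma telescoping_cubes:
  fixes X :: "real set"
  assumes "finite X"
  shows "(\<Sum>x\<in>X. (s + 2 * mass_below X m x + 2 * m x)^3 - (s + 2 * mass_below X m x)^3)
         = (s + 2 * sum m X)^3 - s^3"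
  using assms
proof (induction X rule: finite_linorder_max_induct)
  case empty
  then show ?case by simp
next
  case (insert b A)
  have "b \<notin> A" using insert by auto
  have below_old: "mass_below (insert b A) m x = mass_below A m x" if "x \<in> A" for x
    using insert that \<open>b \<notin> A\<close> by (auto simp: mass_below_def)
  have below_max: "mass_below (insert b A) m b = sum m A"
    using insert \<open>b \<notin> A\<close> by (auto simp: mass_below_def intro!: sum.cong)
  show ?case
    using insert \<open>b \<notin> A\<close> below_old below_max by (simp add: sum.insert add_ac)
qed

lemma cube_increment:
  fixes a h :: real
  shows "(a + 2 * h)^3 - a^3 = 6 * h * (a + h)^2 + 2 * h^3"
  by (simp add: power3_eq_cube power2_eq_square algebra_simps)

lemma centred_rank_energy_bound:
  assumes "finite X" and nonneg: "\<And>x. x \<in> X \<Longrightarrow> 0 \<le> m x"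
  shows "(\<Sum>x\<in>X. m x * (centred_rank X m x)^2) \<le> (sum m X)^3 / 3"
proof -
  define W where "W = sum m X"
  let ?a = "\<lambda>x. 2 * mass_below X m x - W"
  have "m x * (centred_rank X m x)^2 \<le> ((?a x + 2 * m x)^3 - (?a x)^3) / 6" if "x \<in> X" for x
  proof -
    have "centred_rank X m x = ?a x + m x"
      by (simp add: centred_rank_def W_def)
    moreover have "0 \<le> m x ^ 3"
      using nonneg[OF that] by simp
    ultimately show ?thesis
      using cube_increment[of "?a x" "m x"] by simp
  qed
  then have "(\<Sum>x\<in>X. m x * (centred_rank X m x)^2)
      \<le> (\<Sum>x\<in>X. (-W + 2 * mass_below X m x + 2 * m x)^3 - (-W + 2 * mass_below X m x)^3) / 6"
    by (subst sum_divide_distrib) (intro sum_mono, simp add: add_ac)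
  also have "\<dots> = ((-W + 2 * W)^3 - (-W)^3) / 6"
    using telescoping_cubes[OF assms(1), of "-W" m] by (simp add: W_def)
  also have "\<dots> = W^3 / 3"
    by (simp add: power3_eq_cube)
  finally show ?thesis by (simp add: W_def)
qed

theorem mainTheorem5:
  fixes X :: "real set" and m :: "real \<Rightarrow> real"
  assumes "discrete_dist X m"
  shows "(spread X m)^2 \<le> (1/3) * moment 2 X m * (moment 0 X m)^3"
proof -
  have fin: "finite X" and nonneg: "\<And>x. x \<in> X \<Longrightarrow> 0 \<le> m x"
    using assms by (auto simp: discrete_dist_def less_imp_le)
  have "(spread X m)^2 = (\<Sum>x\<in>X. m x * x * centred_rank X m x)^2"
    using spread_eq_centred_rank_sum[OF fin] by simp
  also have "\<dots> \<le> moment 2 X m * (\<Sum>x\<in>X. m x * (centred_rank X m x)^2)"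
    using weighted_Cauchy_Schwarz[of X m, OF nonneg] by (simp add: moment_def)
  also have "\<dots> \<le> moment 2 X m * ((moment 0 X m)^3 / 3)"
    using centred_rank_energy_bound[OF fin nonneg] nonneg
    by (intro mult_left_mono) (auto simp: moment_def intro: sum_nonneg)
  finally show ?thesis by simp
qed

end
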